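(* Let $\Gamma$ be a distance-regular graph with valency $k$ and diameter $3$. Then the second largest eigenvalue $\theta_1$ of $\Gamma$ satisfies $$\theta_1\geq \min\left\{\frac{a_1+\sqrt{a_1^2+4k}}{2},\ a_3\right\}.$$
   Context: A connected graph $\Gamma$ of diameter $D$ is distance-regular if there are integers $b_i,c_i$ ($0\le i\le D$) such that for any two vertices $x,y$ at distance $i$, exactly $c_i$ neighbours of $y$ are at distance $i-1$ from $x$ and exactly $b_i$ neighbours of $y$ are at distance $i+1$ from $x$. Then $\Gamma$ is regular of valency $k=b_0$, and $a_i:=k-b_i-c_i$. The eigenvalues of $\Gamma$ are those of its adjacency matrix; $\Gamma$ has exactly $D+1$ distinct eigenvalues $k=\theta_0>\theta_1>\dots>\theta_D$. *)

theory Defs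
  imports "HOL-Analysis.Analysis"
begin

definition simple_graph :: "('a \<Rightarrow> 'a \<Rightarrow> bool) \<Rightarrow> bool" where
  "simple_graph E \<longleftrightarrow> (\<forall>x y. E x y \<longrightarrow> E y x) \<and> (\<forall>x. \<not> E x x)"

definition connected_graph :: "('a \<Rightarrow> 'a \<Rightarrow> bool) \<Rightarrow> bool" where
  "connected_graph E \<longleftrightarrow> (\<forall>x y. \<exists>n. (E ^^ n) x y)"

definition gdist :: "('a \<Rightarrow> 'a \<Rightarrow> bool) \<Rightarrow> 'a \<Rightarrow> 'a \<Rightarrow> nat" where
  "gdist E x y = (LEAST n. (E ^^ n) x y)"

definition diameter :: "('a::finite \<Rightarrow> 'a \<Rightarrow> bool) \<Rightarrow> nat" where
  "diameter E = Max {gdist E x y | x y. True}"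

definition distance_regular ::
  "('a::finite \<Rightarrow> 'a \<Rightarrow> bool) \<Rightarrow> (nat \<Rightarrow> nat) \<Rightarrow> (nat \<Rightarrow> nat) \<Rightarrow> bool" where
  "distance_regular E b c \<longleftrightarrow> simple_graph E \<and> connected_graph E \<and>
     (\<forall>x y. let i = gdist E x y in
        (i \<ge> 1 \<longrightarrow> card {z. E y z \<and> gdist E x z + 1 = i} = c i) \<and>
        card {z. E y z \<and> gdist E x z = i + 1} = b i)"

definition adj_matrix :: "('a::finite \<Rightarrow> 'a \<Rightarrow> bool) \<Rightarrow> real^'a^'a" where
  "adj_matrix E = (\<chi> i j. if E i j then 1 else 0)"

definition eigenvalues :: "('a::finite \<Rightarrow> 'a \<Rightarrow> bool) \<Rightarrow> real set" where
  "eigenvalues E = {\<theta>. \<exists>v. v \<noteq> 0 \<and> adj_matrix E *v v = \<theta> *\<^sub>R v}"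

definition second_eigenvalue :: "('a::finite \<Rightarrow> 'a \<Rightarrow> bool) \<Rightarrow> real" where
  "second_eigenvalue E = Max (eigenvalues E - {Max (eigenvalues E)})"

end

theory Submission
  imports Defs
begin

text \<open>Fix a base vertex x. For a real t, a sequence w with w 0 \<noteq> 0 satisfying the three-term
  recurrence c i w (i - 1) + a i w i + b i w (i + 1) = t w i for 0 \<le> i \<le> 3 makes
  y \<mapsto> w (d(x, y)) a t-eigenvector of the adjacency matrix. Solving the recurrence upwards from
  i = 0, the last equation becomes F t = 0 for a quartic F with the trivial root k. At
  m = min s a3, with s = (a1 + sqrt (a1^2 + 4 k)) / 2 the positive root of the quadratic
  P2 t = t^2 - a1 t - k that appears as w 2, one finds F m \<le> 0, while F / (k - t) is positive
  at k; the intermediate value theorem gives an eigenvalue t with m \<le> t < k. As k is the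
  largest eigenvalue of the k-regular graph, theta_1 \<ge> t \<ge> m.\<close>

lemma eigenvector_combination_eq_0:
  fixes f :: "'v::real_vector \<Rightarrow> 'v"
  assumes "linear f" "finite T"
    and "\<And>t. t \<in> T \<Longrightarrow> f (v t) = t *\<^sub>R v t \<and> v t \<noteq> 0"
    and "(\<Sum>t\<in>T. g t *\<^sub>R v t) = 0"
  shows "\<forall>t\<in>T. g t = 0"
  using assms(2-)
proof (induction T arbitrary: g rule: finite_induct)
  case empty
  then show ?case by simp
next
  case (insert m T)
  have sum_insert: "g m *\<^sub>R v m + (\<Sum>t\<in>T. g t *\<^sub>R v t) = 0"
    using insert by simp
  have "f (\<Sum>t\<in>T. g t *\<^sub>R v t) = (\<Sum>t\<in>T. (g t * t) *\<^sub>R v t)"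
    using insert.prems by (simp add: linear_sum[OF assms(1)] linear_scale[OF assms(1)])
  moreover have "f (g m *\<^sub>R v m) = (g m * m) *\<^sub>R v m"
    using insert.prems by (simp add: linear_scale[OF assms(1)])
  moreover have "f (g m *\<^sub>R v m + (\<Sum>t\<in>T. g t *\<^sub>R v t)) = 0"
    using sum_insert linear_0[OF assms(1)] by simp
  ultimately have "(g m * m) *\<^sub>R v m + (\<Sum>t\<in>T. (g t * t) *\<^sub>R v t) = 0"
    by (simp add: linear_add[OF assms(1)])
  then have "(\<Sum>t\<in>T. (g t * t) *\<^sub>R v t) = m *\<^sub>R (- (g m *\<^sub>R v m))"
    by (simp add: eq_neg_iff_add_eq_0 add.commute mult.commute)
  also have "\<dots> = m *\<^sub>R (\<Sum>t\<in>T. g t *\<^sub>R v t)"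
    using sum_insert by (metis add.commute eq_neg_iff_add_eq_0)
  finally have "(\<Sum>t\<in>T. (g t * (t - m)) *\<^sub>R v t) = 0"
    by (simp add: scaleR_sum_right right_diff_distrib scaleR_diff_left sum_subtractf mult.commute)
  then have "\<forall>t\<in>T. g t * (t - m) = 0"
    using insert.IH[of "\<lambda>t. g t * (t - m)"] insert.prems by auto
  then have zero: "\<forall>t\<in>T. g t = 0"
    using insert.hyps by auto
  then have "g m = 0"
    using sum_insert insert.prems by simp
  with zero show ?case by simp
qed

lemma finite_eigenvalues_linear:
  fixes f :: "'v::euclidean_space \<Rightarrow> 'v"
  assumes "linear f"
  shows "finite {t. \<exists>v. v \<noteq> 0 \<and> f v = t *\<^sub>R v}"
proof -
  have "card T \<le> DIM('v)" if T: "T \<subseteq> {t. \<exists>v. v \<noteq> 0 \<and> f v = t *\<^sub>R v}" "finite T" for T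
  proof -
    have "\<forall>t\<in>T. \<exists>u. f u = t *\<^sub>R u \<and> u \<noteq> 0"
      using T(1) by auto
    then obtain v where v: "\<And>t. t \<in> T \<Longrightarrow> f (v t) = t *\<^sub>R v t \<and> v t \<noteq> 0"
      by metis
    have inj: "inj_on v T"
    proof
      fix s t assume "s \<in> T" "t \<in> T" "v s = v t"
      then have "s *\<^sub>R v s = t *\<^sub>R v s" using v by metis
      then show "s = t" using v \<open>s \<in> T\<close> by simp
    qed
    have "independent (v ` T)"
      unfolding independent_explicit
    proof (intro conjI allI impI)
      show "finite (v ` T)" using T by simp
      fix g assume "(\<Sum>u\<in>v ` T. g u *\<^sub>R u) = 0"
      then have "(\<Sum>t\<in>T. g (v t) *\<^sub>R v t) = 0" by (simp add: sum.reindex[OF inj])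
      then show "\<forall>u\<in>v ` T. g u = 0"
        using eigenvector_combination_eq_0[OF assms T(2) v, of "g \<circ> v"] by auto
    qed
    then have "card (v ` T) \<le> DIM('v)" using independent_bound by blast
    then show ?thesis using card_image[OF inj] by simp
  qed
  then show ?thesis using finite_if_finite_subsets_card_bdd by blast
qed

lemma finite_eigenvalues: "finite (eigenvalues E)"
  unfolding eigenvalues_def by (rule finite_eigenvalues_linear[OF matrix_vector_mul_linear])

lemma adj_matrix_mult_nth: "(adj_matrix E *v v) $ y = (\<Sum>z | E y z. v $ z)"
proof -
  have "(adj_matrix E *v v) $ y = (\<Sum>z\<in>UNIV. if E y z then v $ z else 0)"
    unfolding adj_matrix_def matrix_vector_mult_def by (auto intro: sum.cong)
  then show ?thesis by (simp add: sum.inter_filter[symmetric])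
qed

lemma gdist_walk: "connected_graph E \<Longrightarrow> (E ^^ gdist E x y) x y"
  unfolding connected_graph_def gdist_def by (metis LeastI)

lemma gdist_le: "(E ^^ n) x y \<Longrightarrow> gdist E x y \<le> n"
  unfolding gdist_def by (rule Least_le)

lemma gdist_self [simp]: "gdist E x x = 0"
  using gdist_le[of 0 E x x] by simp

lemma gdist_eq_0_iff: "connected_graph E \<Longrightarrow> gdist E x y = 0 \<longleftrightarrow> x = y"
  using gdist_walk[of E x y] by auto

lemma gdist_neighbour_le:
  assumes "connected_graph E" "E y z"
  shows "gdist E x z \<le> gdist E x y + 1"
proof -
  have "(E ^^ Suc (gdist E x y)) x z"
    using gdist_walk[OF assms(1)] assms(2) by (rule relpowp_Suc_I)
  then show ?thesis using gdist_le by fastforce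
qed

lemma gdist_neighbour_ge:
  assumes "connected_graph E" "simple_graph E" "E y z"
  shows "gdist E x y \<le> gdist E x z + 1"
  using gdist_neighbour_le[OF assms(1), of z y x] assms(2,3) unfolding simple_graph_def by blast

lemma gdist_eq_1_iff:
  assumes "connected_graph E" "simple_graph E"
  shows "gdist E x z = 1 \<longleftrightarrow> E x z"
proof
  assume "gdist E x z = 1"
  then show "E x z" using gdist_walk[OF assms(1), of x z] by (metis relpowp_1)
next
  assume "E x z"
  then have "gdist E x z \<le> 1" using gdist_le[of 1 E x z] by (metis relpowp_1)
  moreover have "x \<noteq> z" using \<open>E x z\<close> assms(2) unfolding simple_graph_def by blast
  ultimately show "gdist E x z = 1" using gdist_eq_0_iff[OF assms(1)] by fastforce
qed

lemma gdist_Suc_predecessor: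
  assumes "connected_graph E" "gdist E x y = Suc n"
  obtains z where "E z y" "gdist E x z = n"
proof -
  obtain z where walk: "(E ^^ n) x z" and "E z y"
    using gdist_walk[OF assms(1), of x y] assms(2) by auto
  moreover have "n \<le> gdist E x z"
    using gdist_neighbour_le[OF assms(1) \<open>E z y\<close>, of x] assms(2) by simp
  ultimately show ?thesis using that gdist_le[OF walk] by simp
qed

lemma gdist_intermediate:
  assumes "connected_graph E" "m \<le> gdist E x y"
  obtains z where "gdist E x z = m"
  using assms(2) that
proof (induction "gdist E x y" arbitrary: y)
  case 0
  then show ?case by auto
next
  case (Suc n)
  show ?case
  proof (cases "m = Suc n")
    case True
    then show ?thesis using Suc by metis
  next
    case False
    obtain z where "gdist E x z = n"
      using gdist_Suc_predecessor[OF assms(1) Suc(2)[symmetric]] by blast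
    with False Suc show ?thesis by fastforce
  qed
qed

lemma gdist_le_diameter: "gdist E x y \<le> diameter E"
  unfolding diameter_def
proof (rule Max_ge)
  have "{gdist E x y |x y. True} = (\<lambda>(x, y). gdist E x y) ` UNIV" by auto
  then show "finite {gdist E x y |x y. True}" by simp
qed auto

lemma diameter_attained:
  obtains x y where "gdist E x y = diameter E"
proof -
  have eq: "{gdist E x y |x y. True} = (\<lambda>(x, y). gdist E x y) ` UNIV" by auto
  have "diameter E \<in> (\<lambda>(x, y). gdist E x y) ` UNIV"
    unfolding diameter_def eq by (rule Max_in) auto
  then show ?thesis using that by auto
qed

lemma
  assumes "distance_regular E b c"
  shows distance_regular_simple_graph: "simple_graph E"
    and distance_regular_connected_graph: "connected_graph E"
    and distance_regular_card_closer:
      "gdist E x y = i \<Longrightarrow> 1 \<le> i \<Longrightarrow> card {z. E y z \<and> gdist E x z + 1 = i} = c i"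
    and distance_regular_card_farther:
      "gdist E x y = i \<Longrightarrow> card {z. E y z \<and> gdist E x z = i + 1} = b i"
  using assms unfolding distance_regular_def Let_def by auto

lemma distance_regular_neighbours_self:
  assumes "distance_regular E b c"
  shows "{z. E y z} = {z. E y z \<and> gdist E y z = 1}" and "card {z. E y z} = b 0"
proof -
  show eq: "{z. E y z} = {z. E y z \<and> gdist E y z = 1}"
    using gdist_eq_1_iff[OF distance_regular_connected_graph distance_regular_simple_graph, OF assms assms]
    by auto
  show "card {z. E y z} = b 0"
    using distance_regular_card_farther[OF assms gdist_self, of y] unfolding eq by simp
qed

lemma distance_regular_sum_neighbours:
  fixes f :: "nat \<Rightarrow> real"
  assumes dr: "distance_regular E b c" and i: "gdist E x y = i" "1 \<le> i"
  shows "b i + c i \<le> b 0"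
    and "(\<Sum>z | E y z. f (gdist E x z)) = real (c i) * f (i - 1)
           + (real (b 0) - real (b i) - real (c i)) * f i + real (b i) * f (i + 1)"
proof -
  note cn = distance_regular_connected_graph[OF dr]
  note sg = distance_regular_simple_graph[OF dr]
  define closer where "closer = {z. E y z \<and> gdist E x z + 1 = i}"
  define level where "level = {z. E y z \<and> gdist E x z = i}"
  define farther where "farther = {z. E y z \<and> gdist E x z = i + 1}"
  have partition: "{z. E y z} = closer \<union> level \<union> farther"
    using gdist_neighbour_le[OF cn, of y _ x] gdist_neighbour_ge[OF cn sg, of y _ x] i(1)
    unfolding closer_def level_def farther_def by fastforce
  have disjoint: "closer \<inter> level = {}" "(closer \<union> level) \<inter> farther = {}"
    unfolding closer_def level_def farther_def by auto
  have card_closer: "card closer = c i"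
    unfolding closer_def using distance_regular_card_closer[OF dr i] .
  have card_farther: "card farther = b i"
    unfolding farther_def using distance_regular_card_farther[OF dr i(1)] .
  have "b 0 = c i + card level + b i"
    using distance_regular_neighbours_self(2)[OF dr, of y] card_closer card_farther
    unfolding partition by (simp add: card_Un_disjoint disjoint)
  then show "b i + c i \<le> b 0" by simp
  then have card_level: "real (card level) = real (b 0) - real (b i) - real (c i)"
    using \<open>b 0 = c i + card level + b i\<close> by simp
  have "(\<Sum>z | E y z. f (gdist E x z))
      = (\<Sum>z\<in>closer. f (gdist E x z)) + (\<Sum>z\<in>level. f (gdist E x z)) + (\<Sum>z\<in>farther. f (gdist E x z))"
    unfolding partition by (simp add: sum.union_disjoint disjoint)
  also have "\<dots> = (\<Sum>z\<in>closer. f (i - 1)) + (\<Sum>z\<in>level. f i) + (\<Sum>z\<in>farther. f (i + 1))"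
    unfolding closer_def level_def farther_def
    by (intro arg_cong2[where f = "(+)"] sum.cong) auto
  finally show "(\<Sum>z | E y z. f (gdist E x z)) = real (c i) * f (i - 1)
           + (real (b 0) - real (b i) - real (c i)) * f i + real (b i) * f (i + 1)"
    using card_closer card_level card_farther by simp
qed

lemma distance_regular_c1:
  assumes dr: "distance_regular E b c" and "1 \<le> diameter E"
  shows "c 1 = 1"
proof -
  note cn = distance_regular_connected_graph[OF dr]
  obtain x y where "gdist E x y = diameter E" by (rule diameter_attained)
  then obtain z where z: "gdist E x z = 1"
    using gdist_intermediate[OF cn] assms(2) by metis
  then have "{w. E z w \<and> gdist E x w + 1 = 1} = {x}"
    using gdist_eq_1_iff[OF cn distance_regular_simple_graph[OF dr]] gdist_eq_0_iff[OF cn]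
      distance_regular_simple_graph[OF dr] unfolding simple_graph_def by auto
  then show ?thesis using distance_regular_card_closer[OF dr z] by simp
qed

lemma distance_regular_b_pos:
  assumes dr: "distance_regular E b c" and "i < diameter E"
  shows "0 < b i"
proof -
  note cn = distance_regular_connected_graph[OF dr]
  obtain x y where "gdist E x y = diameter E" by (rule diameter_attained)
  then obtain z where z: "gdist E x z = Suc i"
    using gdist_intermediate[OF cn, of "Suc i"] assms(2) by (metis Suc_leI)
  then obtain w where "E w z" "gdist E x w = i" by (rule gdist_Suc_predecessor[OF cn])
  then have "z \<in> {z. E w z \<and> gdist E x z = i + 1}" using z by simp
  then show ?thesis
    using distance_regular_card_farther[OF dr \<open>gdist E x w = i\<close>] card_gt_0_iff by fastforce
qed

lemma distance_regular_b_diameter: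
  assumes dr: "distance_regular E b c"
  shows "b (diameter E) = 0"
proof -
  obtain x y where xy: "gdist E x y = diameter E" by (rule diameter_attained)
  have "gdist E x z \<noteq> diameter E + 1" for z
    using gdist_le_diameter[of E x z] by simp
  then have "{z. E y z \<and> gdist E x z = diameter E + 1} = {}" by simp
  then show ?thesis using distance_regular_card_farther[OF dr xy] by (metis card.empty)
qed

lemma distance_regular_b_c_le:
  assumes dr: "distance_regular E b c" and "1 \<le> i" "i \<le> diameter E"
  shows "b i + c i \<le> b 0"
proof -
  obtain x y where "gdist E x y = diameter E" by (rule diameter_attained)
  then obtain z where "gdist E x z = i"
    using gdist_intermediate[OF distance_regular_connected_graph[OF dr]] assms(3) by metis
  then show ?thesis using distance_regular_sum_neighbours(1)[OF dr _ assms(2)] by blast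
qed

lemma regular_graph_eigenvalue_abs_le:
  assumes valency: "\<And>y. card {z. E y z} = k" and "e \<in> eigenvalues E"
  shows "\<bar>e\<bar> \<le> real k"
proof -
  obtain u where "u \<noteq> 0" and u: "adj_matrix E *v u = e *\<^sub>R u"
    using assms(2) unfolding eigenvalues_def by auto
  have "Max (range (\<lambda>z. \<bar>u $ z\<bar>)) \<in> range (\<lambda>z. \<bar>u $ z\<bar>)"
    by (rule Max_in) auto
  then obtain y where y: "Max (range (\<lambda>z. \<bar>u $ z\<bar>)) = \<bar>u $ y\<bar>" by (metis rangeE)
  have "\<bar>u $ z\<bar> \<le> Max (range (\<lambda>z. \<bar>u $ z\<bar>))" for z by (rule Max_ge) auto
  then have max: "\<bar>u $ z\<bar> \<le> \<bar>u $ y\<bar>" for z unfolding y .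
  obtain z0 where "u $ z0 \<noteq> 0" using \<open>u \<noteq> 0\<close> by (auto simp: vec_eq_iff)
  then have pos: "0 < \<bar>u $ y\<bar>" using max[of z0] by linarith
  have "\<bar>e\<bar> * \<bar>u $ y\<bar> = \<bar>\<Sum>z | E y z. u $ z\<bar>"
    using arg_cong[OF u, of "\<lambda>w. w $ y"] by (simp add: adj_matrix_mult_nth abs_mult)
  also have "\<dots> \<le> (\<Sum>z | E y z. \<bar>u $ z\<bar>)" by (rule sum_abs)
  also have "\<dots> \<le> real k * \<bar>u $ y\<bar>"
    using sum_bounded_above[of "{z. E y z}" "\<lambda>z. \<bar>u $ z\<bar>" "\<bar>u $ y\<bar>"] max valency by simp
  finally show ?thesis using pos by simp
qed

lemma regular_graph_valency_eigenvalue: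
  assumes valency: "\<And>y. card {z. E y z} = k"
  shows "real k \<in> eigenvalues E"
proof -
  have "adj_matrix E *v 1 = real k *\<^sub>R (1 :: real^'a)"
    by (simp add: vec_eq_iff adj_matrix_mult_nth valency)
  moreover have "(1 :: real^'a) \<noteq> 0" by (simp add: vec_eq_iff)
  ultimately show ?thesis unfolding eigenvalues_def by blast
qed

lemma regular_graph_Max_eigenvalues:
  assumes "\<And>y. card {z. E y z} = k"
  shows "Max (eigenvalues E) = real k"
  using regular_graph_valency_eigenvalue[OF assms] regular_graph_eigenvalue_abs_le[OF assms]
  by (intro Max_eqI finite_eigenvalues) fastforce+

lemma le_second_eigenvalue:
  assumes "t \<in> eigenvalues E" "t \<noteq> Max (eigenvalues E)"
  shows "t \<le> second_eigenvalue E"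
  unfolding second_eigenvalue_def using assms finite_eigenvalues by (intro Max_ge) auto

lemma distance_regular_recurrence_eigenvalue:
  fixes w :: "nat \<Rightarrow> real"
  assumes dr: "distance_regular E b c"
    and "w 0 \<noteq> 0"
    and base: "real (b 0) * w 1 = t * w 0"
    and step: "\<And>i. 1 \<le> i \<Longrightarrow> i \<le> diameter E \<Longrightarrow>
       real (c i) * w (i - 1) + (real (b 0) - real (b i) - real (c i)) * w i + real (b i) * w (i + 1)
         = t * w i"
  shows "t \<in> eigenvalues E"
proof -
  fix x :: 'a
  define v :: "real^'a" where "v = (\<chi> y. w (gdist E x y))"
  have "(adj_matrix E *v v) $ y = t * v $ y" for y
  proof (cases "y = x")
    case True
    have "(adj_matrix E *v v) $ y = (\<Sum>z | E x z. w 1)"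
      using True distance_regular_neighbours_self(1)[OF dr, of x]
      unfolding adj_matrix_mult_nth v_def by (auto intro: sum.cong)
    then show ?thesis using True base distance_regular_neighbours_self(2)[OF dr, of x]
      by (simp add: v_def)
  next
    case False
    then have "gdist E x y \<noteq> 0"
      using gdist_eq_0_iff[OF distance_regular_connected_graph[OF dr]] by simp
    then have "1 \<le> gdist E x y" by simp
    then show ?thesis
      using distance_regular_sum_neighbours(2)[OF dr refl \<open>1 \<le> gdist E x y\<close>, where f = w]
        step[OF _ gdist_le_diameter] unfolding adj_matrix_mult_nth v_def by simp
  qed
  moreover have "v $ x \<noteq> 0"
    using \<open>w 0 \<noteq> 0\<close> by (simp add: v_def)
  then have "v \<noteq> 0" by auto
  ultimately show ?thesis unfolding eigenvalues_def by (auto simp: vec_eq_iff)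
qed

lemma cubic_root_bound:
  fixes k b1 b2 c2 c3 :: real
  assumes "0 < k" "0 < b1" "0 < b2" "0 \<le> c2" "0 \<le> c3" "c3 \<le> k"
  defines "a1 \<equiv> k - b1 - 1" and "a2 \<equiv> k - b2 - c2" and "a3 \<equiv> k - c3"
  defines "P2 \<equiv> \<lambda>t. t * t - a1 * t - k"
  defines "P3 \<equiv> \<lambda>t. (t - a2) * P2 t - b1 * c2 * t"
  obtains t where "c3 * b2 * P2 t + (a3 - t) * P3 t = 0" "t < k"
    "min ((a1 + sqrt (a1\<^sup>2 + 4 * k)) / 2) a3 \<le> t"
proof -
  define F where "F = (\<lambda>t. c3 * b2 * P2 t + (a3 - t) * P3 t)"
  define r where "r = sqrt (a1\<^sup>2 + 4 * k)"
  define s where "s = (a1 + r) / 2"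
  define s' where "s' = (a1 - r) / 2"
  have r_sq: "r * r = a1\<^sup>2 + 4 * k"
    unfolding r_def using \<open>0 < k\<close> by simp
  have "\<bar>a1\<bar> \<le> r"
    unfolding r_def using \<open>0 < k\<close> by (metis add_increasing2 abs_le_square_iff less_eq_real_def
      mult_nonneg_nonneg real_sqrt_abs real_sqrt_le_mono zero_le_numeral)
  then have "0 \<le> s" "s' \<le> 0" unfolding s_def s'_def by auto
  have P2_factor: "P2 t = (t - s) * (t - s')" for t
    unfolding P2_def s_def s'_def using r_sq by (simp add: field_simps power2_eq_square)
  have "s < k"
  proof (rule ccontr)
    assume "\<not> s < k"
    then have "(k - s) * (k - s') \<le> 0"
      using \<open>s' \<le> 0\<close> \<open>0 < k\<close> by (intro mult_nonpos_nonneg) auto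
    moreover have "P2 k = k * b1" unfolding P2_def a1_def by (simp add: algebra_simps)
    moreover have "0 < k * b1" using \<open>0 < k\<close> \<open>0 < b1\<close> by simp
    ultimately show False using P2_factor[of k] by linarith
  qed
  define m where "m = min s a3"
  have F_m: "F m \<le> 0"
  proof (cases "s \<le> a3")
    case True
    then have "F m = - ((a3 - s) * (b1 * c2 * s))"
      using P2_factor[of s] unfolding F_def P3_def m_def by simp
    then show ?thesis using True \<open>0 < b1\<close> \<open>0 \<le> c2\<close> \<open>0 \<le> s\<close> by simp
  next
    case False
    then have "P2 a3 \<le> 0"
      using P2_factor[of a3] \<open>s' \<le> 0\<close> \<open>c3 \<le> k\<close> unfolding a3_def
      by (simp add: mult_nonpos_nonneg)
    moreover have "F m = c3 * b2 * P2 a3" using False unfolding F_def m_def by simp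
    ultimately show ?thesis using \<open>0 \<le> c3\<close> \<open>0 < b2\<close> by (simp add: mult_nonneg_nonpos)
  qed
  \<comment> \<open>k is the trivial root of F; the sign change of H = F / (k - t) on [m, k] gives another\<close>
  define H where "H = (\<lambda>t. k * b1 * b2 - c3 * b2 * (t + b1 + 1)
      - (a3 - t) * (P2 t + (b2 + c2) * (t + b1 + 1) - b1 * c2))"
  have F_factor: "F t = (k - t) * H t" for t
    unfolding F_def H_def P3_def P2_def a1_def a2_def a3_def by (simp only: algebra_simps)
  have "H k = k * b1 * b2 + c3 * k * b1 + c3 * c2 * (k + 1)"
    unfolding H_def P2_def a1_def a3_def by (simp add: algebra_simps)
  then have "0 < H k" using assms(1-5)
    by (simp add: add_pos_nonneg mult_pos_pos mult_nonneg_nonneg)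
  moreover have "m < k" using \<open>s < k\<close> unfolding m_def by simp
  moreover have "H m \<le> 0" using F_m F_factor[of m] \<open>m < k\<close>
    by (metis diff_gt_0_iff_gt mult_le_0_iff not_le)
  moreover have "continuous_on {m..k} H" unfolding H_def P2_def by (intro continuous_intros)
  ultimately obtain t where t: "m \<le> t" "t \<le> k" "H t = 0"
    using IVT'[of H m 0 k] by auto
  with \<open>0 < H k\<close> have "t < k" by (cases "t = k") auto
  moreover have "F t = 0" using F_factor t by simp
  ultimately show ?thesis using that t(1) unfolding F_def m_def s_def r_def by blast
qed

lemma intersection_matrix_eigenvalue_bound:
  fixes b c :: "nat \<Rightarrow> real"
  assumes "0 < b 0" "0 < b 1" "0 < b 2" "c 1 = 1" "0 \<le> c 2" "b 3 = 0" "0 \<le> c 3" "c 3 \<le> b 0"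
  defines "a1 \<equiv> b 0 - b 1 - c 1" and "a3 \<equiv> b 0 - b 3 - c 3"
  obtains t w where "w 0 \<noteq> 0" "b 0 * w 1 = t * w 0"
    "\<And>i. 1 \<le> i \<Longrightarrow> i \<le> 3 \<Longrightarrow> c i * w (i - 1) + (b 0 - b i - c i) * w i + b i * w (i + 1) = t * w i"
    "t < b 0" "min ((a1 + sqrt (a1\<^sup>2 + 4 * b 0)) / 2) a3 \<le> t"
proof -
  define P2 where "P2 = (\<lambda>t. t * t - a1 * t - b 0)"
  define P3 where "P3 = (\<lambda>t. (t - (b 0 - b 2 - c 2)) * P2 t - b 1 * c 2 * t)"
  obtain t where root: "c 3 * b 2 * P2 t + (a3 - t) * P3 t = 0" and "t < b 0"
    and bound: "min ((a1 + sqrt (a1\<^sup>2 + 4 * b 0)) / 2) a3 \<le> t"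
    using cubic_root_bound[of "b 0" "b 1" "b 2" "c 2" "c 3"] assms(1-3,5,7-8)
    unfolding P2_def P3_def a1_def a3_def \<open>c 1 = 1\<close> \<open>b 3 = 0\<close> by auto
  \<comment> \<open>a scaled standard sequence, cleared of the denominators b 1 and b 2\<close>
  define w where "w = (\<lambda>i::nat. if i = 0 then b 0 * b 1 * b 2 else if i = 1 then t * b 1 * b 2
      else if i = 2 then P2 t * b 2 else if i = 3 then P3 t else 0)"
  have "c i * w (i - 1) + (b 0 - b i - c i) * w i + b i * w (i + 1) = t * w i"
    if "1 \<le> i" "i \<le> 3" for i
  proof -
    have "i = 1 \<or> i = 2 \<or> i = 3" using that by auto
    then show ?thesis
      using root assms(4)[unfolded One_nat_def]
      by (auto simp: w_def P3_def P2_def a1_def a3_def assms(4,6) algebra_simps)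
  qed
  moreover have "w 0 \<noteq> 0" using assms(1-3) by (simp add: w_def)
  moreover have "b 0 * w 1 = t * w 0" by (simp add: w_def)
  ultimately show ?thesis using that \<open>t < b 0\<close> bound by blast
qed

theorem lemma6:
  fixes E :: "'a::finite \<Rightarrow> 'a \<Rightarrow> bool" and b c :: "nat \<Rightarrow> nat"
  assumes "distance_regular E b c"
    and "diameter E = 3"
  defines "k \<equiv> real (b 0)"
    and "a1 \<equiv> real (b 0) - real (b 1) - real (c 1)"
    and "a3 \<equiv> real (b 0) - real (b 3) - real (c 3)"
  shows "second_eigenvalue E \<ge> min ((a1 + sqrt (a1\<^sup>2 + 4 * k)) / 2) a3"
proof -
  note dr = assms(1)
  have "0 < b 0" "0 < b 1" "0 < b 2"
    using distance_regular_b_pos[OF dr] assms(2) by auto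
  moreover have "c 1 = 1" "b 3 = 0" "c 3 \<le> b 0"
    using distance_regular_c1[OF dr] distance_regular_b_diameter[OF dr]
      distance_regular_b_c_le[OF dr, of 3] assms(2) by auto
  ultimately obtain t w where "w 0 \<noteq> 0" "real (b 0) * w 1 = t * w 0"
    and "\<And>i. 1 \<le> i \<Longrightarrow> i \<le> 3 \<Longrightarrow> real (c i) * w (i - 1)
      + (real (b 0) - real (b i) - real (c i)) * w i + real (b i) * w (i + 1) = t * w i"
    and "t < k" and bound: "min ((a1 + sqrt (a1\<^sup>2 + 4 * k)) / 2) a3 \<le> t"
    using intersection_matrix_eigenvalue_bound[of "\<lambda>i. real (b i)" "\<lambda>i. real (c i)"]
    unfolding k_def a1_def a3_def by (metis of_nat_0_le_iff of_nat_0_less_iff of_nat_1 of_nat_0 of_nat_le_iff)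
  then have "t \<in> eigenvalues E"
    using distance_regular_recurrence_eigenvalue[OF dr] assms(2) by metis
  moreover have "Max (eigenvalues E) = k"
    unfolding k_def by (rule regular_graph_Max_eigenvalues[OF distance_regular_neighbours_self(2)[OF dr]])
  ultimately have "t \<le> second_eigenvalue E"
    using \<open>t < k\<close> by (intro le_second_eigenvalue) auto
  with bound show ?thesis by linarith
qed

end
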